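(* Assume the abstract setting of the context. Then there exist $\epsilon_0>0$, $D'>0$ and $\lambda'>0$ such that \[ \|\mathcal L_{\omega,\epsilon}^n h\|_s\le D'e^{-\lambda' n}\|h\|_s \] for all $\epsilon\in I$ with $|\epsilon|\le\epsilon_0$, all $\omega\in\Omega'$, all $n\in\mathbb N$ and all $h\in\mathcal B_s^0$.
   Context: $(\Omega,\mathcal F,\mathbb P)$ is a probability space and $\sigma\colon\Omega\to\Omega$ an invertible, measurable, $\mathbb P$-preserving ergodic map. $(\mathcal B_w,\|\cdot\|_w)$, $(\mathcal B_s,\|\cdot\|_s)$ are Banach spaces with $\mathcal B_s\subset\mathcal B_w$ and $\|h\|_w\le\|h\|_s$ on $\mathcal B_s$. $\psi$ is a nonzero bounded linear functional on $\mathcal B_s$ admitting a bounded extension to $\mathcal B_w$; $\mathcal B_s^0:=\{h\in\mathcal B_s:\psi(h)=0\}$. $I\subset\mathbb R$ is an interval containing $0$; for $\epsilon\in I$, $\omega\in\Omega$, $\mathcal L_{\omega,\epsilon}$ is a bounded linear operator on both $\mathcal B_s$ and $\mathcal B_w$, with $\omega\mapsto\mathcal L_{\omega,\epsilon}h$ measurable for each $h\in\mathcal B_s$ and $\epsilon\in I$. $\mathcal L_\omega:=\mathcal L_{\omega,0}$, $\mathcal L^n_{\omega,\epsilon}:=\mathcal L_{\sigma^{n-1}\omega,\epsilon}\circ\cdots\circ\mathcal L_{\omega,\epsilon}$, $\mathcal L^n_\omega:=\mathcal L^n_{\omega,0}$. There are constants $C,D,\lambda>0$, $\lambda_1\in(0,1)$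 and a measurable $\sigma$-invariant set $\Omega'\subset\Omega$ with $\mathbb P(\Omega')=1$ such that for all $\epsilon\in I$, $\omega\in\Omega'$, $n\in\mathbb N$: (a) $\|\mathcal L_\omega^n h\|_s\le De^{-\lambda n}\|h\|_s$ for $h\in\mathcal B_s^0$; (b) $\|\mathcal L^n_{\omega,\epsilon}h\|_s\le C\lambda_1^n\|h\|_s+C\|h\|_w$ for $h\in\mathcal B_s$; (c) $\|(\mathcal L_{\omega,\epsilon}-\mathcal L_\omega)h\|_w\le C|\epsilon|\,\|h\|_s$ for $h\in\mathcal B_s$; (d) $\|\mathcal L^n_{\omega,\epsilon}\|_{\mathcal B_w\to\mathcal B_w}\le C$; (e) $\psi(\mathcal L_{\omega,\epsilon}h)=\psi(h)$ for $h\in\mathcal B_s$. *)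

theory Defs
  imports "HOL-Probability.Probability"
begin

fun cocycle :: "('o \<Rightarrow> 'v \<Rightarrow> 'v) \<Rightarrow> ('o \<Rightarrow> 'o) \<Rightarrow> nat \<Rightarrow> 'o \<Rightarrow> 'v \<Rightarrow> 'v" where
  "cocycle L \<sigma> 0 \<omega> = id"
| "cocycle L \<sigma> (Suc n) \<omega> = L ((\<sigma> ^^ n) \<omega>) \<circ> cocycle L \<sigma> n \<omega>"

definition measure_preserving_map :: "'a measure \<Rightarrow> ('a \<Rightarrow> 'a) \<Rightarrow> bool" where
  "measure_preserving_map M \<sigma> \<longleftrightarrow> \<sigma> \<in> M \<rightarrow>\<^sub>M M \<and>
     (\<forall>A\<in>sets M. emeasure M (\<sigma> -` A \<inter> space M) = emeasure M A)"

definition ergodic_map :: "'a measure \<Rightarrow> ('a \<Rightarrow> 'a) \<Rightarrow> bool" where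
  "ergodic_map M \<sigma> \<longleftrightarrow> measure_preserving_map M \<sigma> \<and>
     (\<forall>A\<in>sets M. \<sigma> -` A \<inter> space M = A \<longrightarrow> measure M A = 0 \<or> measure M A = 1)"

definition invertible_measurable_map :: "'a measure \<Rightarrow> ('a \<Rightarrow> 'a) \<Rightarrow> bool" where
  "invertible_measurable_map M \<sigma> \<longleftrightarrow> \<sigma> \<in> M \<rightarrow>\<^sub>M M \<and> bij_betw \<sigma> (space M) (space M) \<and>
     inv_into (space M) \<sigma> \<in> M \<rightarrow>\<^sub>M M"

end

theory Submission
  imports Defs
begin

text \<open>
  By (c) and (d), the Duhamel formula
  L_\<epsilon>^n - L_0^n = \<Sum>_{k<n} L_\<epsilon>^(n-k-1) (L_\<epsilon> - L_0) L_0^k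
  bounds the weak norm of L_\<epsilon>^N h - L_0^N h by O(N |\<epsilon>|) |h|_s on B_s^0.
  Feeding g = L_\<epsilon>^N h into the Lasota-Yorke inequality (b) and using the decay (a)
  of L_0^N h gives |L_\<epsilon>^(2N) h|_s \<le> |h|_s / 2 once N is large and then |\<epsilon>| is small.
  Since B_s^0 is invariant by (e) and L_\<epsilon>^n is uniformly bounded by (b), iterating this
  contraction gives uniform exponential decay.
\<close>

lemma funpow_in_invariant_set:
  assumes "\<And>x. x \<in> S \<Longrightarrow> f x \<in> S" and "x \<in> S"
  shows "(f ^^ n) x \<in> S"
  using assms by (induction n) auto

lemma cocycle_add:
  "cocycle A \<sigma> (m + n) \<omega> = cocycle A \<sigma> m ((\<sigma> ^^ n) \<omega>) \<circ> cocycle A \<sigma> n \<omega>"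
  by (induction m) (auto simp: funpow_add)

lemma cocycle_in_invariant_set:
  assumes "\<And>\<omega>. \<omega> \<in> S \<Longrightarrow> \<sigma> \<omega> \<in> S"
    and "\<And>\<omega> h. \<omega> \<in> S \<Longrightarrow> h \<in> V \<Longrightarrow> A \<omega> h \<in> V"
    and "\<omega> \<in> S" "h \<in> V"
  shows "cocycle A \<sigma> n \<omega> h \<in> V"
  using assms by (induction n) (auto simp: funpow_in_invariant_set)

lemma cocycle_norm_le_max_one:
  fixes A :: "'o \<Rightarrow> 'v::real_normed_vector \<Rightarrow> 'v"
  assumes "n \<ge> 1 \<Longrightarrow> norm (cocycle A \<sigma> n \<omega> h) \<le> c * norm h"
  shows "norm (cocycle A \<sigma> n \<omega> h) \<le> max c 1 * norm h"
proof (cases "n = 0")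
  case True
  have "norm h \<le> max c 1 * norm h" by (simp add: mult_le_cancel_right1)
  with True show ?thesis by simp
next
  case False
  then have "norm (cocycle A \<sigma> n \<omega> h) \<le> c * norm h" using assms by simp
  also have "\<dots> \<le> max c 1 * norm h" by (simp add: mult_right_mono)
  finally show ?thesis .
qed

lemma cocycle_diff_eq_sum:
  fixes A A\<^sub>0 :: "'o \<Rightarrow> 's \<Rightarrow> 's" and Aw :: "'o \<Rightarrow> 'w::real_vector \<Rightarrow> 'w" and j :: "'s \<Rightarrow> 'w"
  assumes lin: "\<And>k. linear (Aw ((\<sigma> ^^ k) \<omega>))"
    and compat: "\<And>k h. Aw ((\<sigma> ^^ k) \<omega>) (j h) = j (A ((\<sigma> ^^ k) \<omega>) h)"
  shows "j (cocycle A \<sigma> n \<omega> x) - j (cocycle A\<^sub>0 \<sigma> n \<omega> x) =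
    (\<Sum>k<n. cocycle Aw \<sigma> (n - Suc k) ((\<sigma> ^^ Suc k) \<omega>)
       (j (A ((\<sigma> ^^ k) \<omega>) (cocycle A\<^sub>0 \<sigma> k \<omega> x)) - j (A\<^sub>0 ((\<sigma> ^^ k) \<omega>) (cocycle A\<^sub>0 \<sigma> k \<omega> x))))"
proof (induction n)
  case 0
  then show ?case by simp
next
  case (Suc n)
  define w where "w = (\<sigma> ^^ n) \<omega>"
  define a where "a = cocycle A \<sigma> n \<omega> x"
  define b where "b = cocycle A\<^sub>0 \<sigma> n \<omega> x"
  have shift: "Aw w (cocycle Aw \<sigma> (n - Suc k) ((\<sigma> ^^ Suc k) \<omega>) g) =
      cocycle Aw \<sigma> (Suc n - Suc k) ((\<sigma> ^^ Suc k) \<omega>) g" if "k < n" for k g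
  proof -
    have "(\<sigma> ^^ (n - Suc k)) ((\<sigma> ^^ Suc k) \<omega>) = (\<sigma> ^^ (n - Suc k + Suc k)) \<omega>"
      by (simp only: funpow_add o_apply)
    then have "(\<sigma> ^^ (n - Suc k)) ((\<sigma> ^^ Suc k) \<omega>) = w"
      using that by (simp add: w_def)
    moreover have "Suc n - Suc k = Suc (n - Suc k)" using that by simp
    ultimately show ?thesis by simp
  qed
  have "j (A w a) - j (A\<^sub>0 w b) = Aw w (j a - j b) + (j (A w b) - j (A\<^sub>0 w b))"
    using compat[of n] linear_diff[OF lin[of n]] by (simp add: w_def)
  also have "Aw w (j a - j b) = (\<Sum>k<n. Aw w (cocycle Aw \<sigma> (n - Suc k) ((\<sigma> ^^ Suc k) \<omega>)
       (j (A ((\<sigma> ^^ k) \<omega>) (cocycle A\<^sub>0 \<sigma> k \<omega> x)) - j (A\<^sub>0 ((\<sigma> ^^ k) \<omega>) (cocycle A\<^sub>0 \<sigma> k \<omega> x)))))"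
    using Suc.IH linear_sum[OF lin[of n]] by (simp add: a_def b_def w_def)
  also have "\<dots> = (\<Sum>k<n. cocycle Aw \<sigma> (Suc n - Suc k) ((\<sigma> ^^ Suc k) \<omega>)
       (j (A ((\<sigma> ^^ k) \<omega>) (cocycle A\<^sub>0 \<sigma> k \<omega> x)) - j (A\<^sub>0 ((\<sigma> ^^ k) \<omega>) (cocycle A\<^sub>0 \<sigma> k \<omega> x))))"
    by (intro sum.cong refl shift) simp
  finally show ?case
    by (simp add: a_def b_def w_def)
qed

lemma cocycle_exp_decay_of_periodic_contraction:
  fixes A :: "'o \<Rightarrow> 'v::real_normed_vector \<Rightarrow> 'v"
  assumes S: "\<And>\<omega>. \<omega> \<in> S \<Longrightarrow> \<sigma> \<omega> \<in> S"
    and V: "\<And>\<omega> h. \<omega> \<in> S \<Longrightarrow> h \<in> V \<Longrightarrow> A \<omega> h \<in> V"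
    and bounded: "\<And>\<omega> n h. \<omega> \<in> S \<Longrightarrow> h \<in> V \<Longrightarrow> norm (cocycle A \<sigma> n \<omega> h) \<le> B * norm h"
    and contraction: "\<And>\<omega> h. \<omega> \<in> S \<Longrightarrow> h \<in> V \<Longrightarrow> norm (cocycle A \<sigma> p \<omega> h) \<le> \<theta> * norm h"
    and p: "0 < p" and \<theta>: "0 < \<theta>" "\<theta> < 1" and B: "0 \<le> B"
    and \<omega>: "\<omega> \<in> S" and h: "h \<in> V"
  shows "norm (cocycle A \<sigma> n \<omega> h) \<le> B / \<theta> * exp (ln \<theta> / p * n) * norm h"
proof -
  have iterate: "norm (cocycle A \<sigma> (m * p) \<omega> h) \<le> \<theta> ^ m * norm h"
    if "\<omega> \<in> S" "h \<in> V" for m \<omega> h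
  proof (induction m)
    case 0
    then show ?case by simp
  next
    case (Suc m)
    have "cocycle A \<sigma> (Suc m * p) \<omega> h = cocycle A \<sigma> p ((\<sigma> ^^ (m * p)) \<omega>) (cocycle A \<sigma> (m * p) \<omega> h)"
      by (simp add: cocycle_add)
    also have "norm \<dots> \<le> \<theta> * norm (cocycle A \<sigma> (m * p) \<omega> h)"
      using that S V by (intro contraction funpow_in_invariant_set cocycle_in_invariant_set)
    also have "\<dots> \<le> \<theta> * (\<theta> ^ m * norm h)"
      using Suc.IH \<theta> by (intro mult_left_mono) auto
    finally show ?case by simp
  qed
  define m where "m = n div p"
  have n: "n = n mod p + m * p"
    by (simp add: m_def)
  have "cocycle A \<sigma> n \<omega> h = cocycle A \<sigma> (n mod p) ((\<sigma> ^^ (m * p)) \<omega>) (cocycle A \<sigma> (m * p) \<omega> h)"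
    by (subst n) (simp only: cocycle_add o_apply)
  also have "norm \<dots> \<le> B * norm (cocycle A \<sigma> (m * p) \<omega> h)"
    using \<omega> h S V by (intro bounded funpow_in_invariant_set cocycle_in_invariant_set)
  also have "\<dots> \<le> B * (\<theta> ^ m * norm h)"
    using iterate[OF \<omega> h] B by (intro mult_left_mono)
  also have "\<dots> \<le> B * (exp (ln \<theta> / p * n) / \<theta> * norm h)"
  proof -
    have "n \<le> Suc m * p"
      using p n mod_less_divisor[OF p] by (metis add_less_mono1 less_or_eq_imp_le mult_Suc)
    then have "real n \<le> real (Suc m) * real p"
      by (metis of_nat_le_iff of_nat_mult)
    then have "real n / p \<le> Suc m"
      using p by (simp add: divide_le_eq)
    moreover have "ln \<theta> < 0"
      using \<theta> by simp
    ultimately have "ln \<theta> * Suc m \<le> ln \<theta> * (n / p)"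
      by (intro mult_left_mono_neg) auto
    then have "ln \<theta> * Suc m \<le> ln \<theta> / p * n"
      by simp
    moreover have "\<theta> ^ Suc m = exp (ln \<theta> * Suc m)"
      using \<theta> exp_of_nat_mult[of "Suc m" "ln \<theta>"] by (simp add: mult.commute)
    ultimately have "\<theta> ^ Suc m \<le> exp (ln \<theta> / p * n)"
      by simp
    then have "\<theta> ^ m \<le> exp (ln \<theta> / p * n) / \<theta>"
      using \<theta> by (simp add: le_divide_eq mult.commute)
    then show ?thesis using B by (intro mult_left_mono mult_right_mono) auto
  qed
  finally show ?thesis by (simp add: field_simps)
qed

locale perturbed_cocycle =
  fixes \<sigma> :: "'o \<Rightarrow> 'o" and \<Omega>' :: "'o set"
    and j :: "'s::real_normed_vector \<Rightarrow> 'w::real_normed_vector"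
    and \<psi> :: "'s \<Rightarrow> real" and I :: "real set"
    and L :: "'o \<Rightarrow> real \<Rightarrow> 's \<Rightarrow> 's" and Lw :: "'o \<Rightarrow> real \<Rightarrow> 'w \<Rightarrow> 'w"
    and C D \<gamma> \<kappa> :: real
  assumes \<Omega>'_invariant: "\<And>\<omega>. \<omega> \<in> \<Omega>' \<Longrightarrow> \<sigma> \<omega> \<in> \<Omega>'"
    and j_norm: "\<And>h. norm (j h) \<le> norm h"
    and Lw_linear: "\<And>\<omega> \<epsilon>. \<omega> \<in> \<Omega>' \<Longrightarrow> \<epsilon> \<in> I \<Longrightarrow> linear (Lw \<omega> \<epsilon>)"
    and L_compat: "\<And>\<omega> \<epsilon> h. \<omega> \<in> \<Omega>' \<Longrightarrow> \<epsilon> \<in> I \<Longrightarrow> Lw \<omega> \<epsilon> (j h) = j (L \<omega> \<epsilon> h)"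
    and C_pos: "0 < C" and D_pos: "0 < D" and \<gamma>_pos: "0 < \<gamma>"
    and \<kappa>: "0 < \<kappa>" "\<kappa> < 1"
    and unperturbed_decay: "\<And>\<omega> n h. \<omega> \<in> \<Omega>' \<Longrightarrow> n \<ge> 1 \<Longrightarrow> \<psi> h = 0 \<Longrightarrow>
        norm (cocycle (\<lambda>\<omega>. L \<omega> 0) \<sigma> n \<omega> h) \<le> D * exp (- \<gamma> * real n) * norm h"
    and lasota_yorke: "\<And>\<epsilon> \<omega> n h. \<epsilon> \<in> I \<Longrightarrow> \<omega> \<in> \<Omega>' \<Longrightarrow> n \<ge> 1 \<Longrightarrow>
        norm (cocycle (\<lambda>\<omega>. L \<omega> \<epsilon>) \<sigma> n \<omega> h) \<le> C * \<kappa> ^ n * norm h + C * norm (j h)"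
    and perturbation_small: "\<And>\<epsilon> \<omega> h. \<epsilon> \<in> I \<Longrightarrow> \<omega> \<in> \<Omega>' \<Longrightarrow>
        norm (j (L \<omega> \<epsilon> h) - j (L \<omega> 0 h)) \<le> C * \<bar>\<epsilon>\<bar> * norm h"
    and weak_bounded: "\<And>\<epsilon> \<omega> n g. \<epsilon> \<in> I \<Longrightarrow> \<omega> \<in> \<Omega>' \<Longrightarrow> n \<ge> 1 \<Longrightarrow>
        norm (cocycle (\<lambda>\<omega>. Lw \<omega> \<epsilon>) \<sigma> n \<omega> g) \<le> C * norm g"
    and \<psi>_invariant: "\<And>\<epsilon> \<omega> h. \<epsilon> \<in> I \<Longrightarrow> \<omega> \<in> \<Omega>' \<Longrightarrow> \<psi> (L \<omega> \<epsilon> h) = \<psi> h"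
begin

abbreviation Ln :: "real \<Rightarrow> nat \<Rightarrow> 'o \<Rightarrow> 's \<Rightarrow> 's" where
  "Ln \<epsilon> \<equiv> cocycle (\<lambda>\<omega>. L \<omega> \<epsilon>) \<sigma>"

abbreviation Lwn :: "real \<Rightarrow> nat \<Rightarrow> 'o \<Rightarrow> 'w \<Rightarrow> 'w" where
  "Lwn \<epsilon> \<equiv> cocycle (\<lambda>\<omega>. Lw \<omega> \<epsilon>) \<sigma>"

lemma orbit_in_\<Omega>': "\<omega> \<in> \<Omega>' \<Longrightarrow> (\<sigma> ^^ k) \<omega> \<in> \<Omega>'"
  by (rule funpow_in_invariant_set[OF \<Omega>'_invariant])

lemma Ln_bounded:
  assumes "\<epsilon> \<in> I" "\<omega> \<in> \<Omega>'"
  shows "norm (Ln \<epsilon> n \<omega> h) \<le> max (2 * C) 1 * norm h"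
proof (rule cocycle_norm_le_max_one)
  assume "n \<ge> 1"
  then have "norm (Ln \<epsilon> n \<omega> h) \<le> C * \<kappa> ^ n * norm h + C * norm (j h)"
    using lasota_yorke assms by blast
  also have "\<dots> \<le> C * norm h + C * norm h"
  proof -
    have "\<kappa> ^ n * norm h \<le> norm h"
      using \<kappa> by (intro mult_left_le_one_le power_le_one) auto
    then have "C * (\<kappa> ^ n * norm h) \<le> C * norm h"
      using C_pos by (simp add: mult_left_mono)
    moreover have "C * norm (j h) \<le> C * norm h"
      using C_pos j_norm[of h] by (simp add: mult_left_mono)
    ultimately show ?thesis
      by (simp add: mult.assoc)
  qed
  finally show "norm (Ln \<epsilon> n \<omega> h) \<le> 2 * C * norm h" by simp
qed

lemma Ln0_bounded_on_kernel:
  assumes "\<omega> \<in> \<Omega>'" "\<psi> h = 0"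
  shows "norm (Ln 0 n \<omega> h) \<le> max D 1 * norm h"
proof (rule cocycle_norm_le_max_one)
  assume "n \<ge> 1"
  then have "norm (Ln 0 n \<omega> h) \<le> D * exp (- \<gamma> * real n) * norm h"
    using unperturbed_decay assms by blast
  also have "\<dots> \<le> D * norm h"
    using D_pos \<gamma>_pos by (intro mult_right_mono mult_left_le_one_le) auto
  finally show "norm (Ln 0 n \<omega> h) \<le> D * norm h" .
qed

lemma Lwn_bounded:
  assumes "\<epsilon> \<in> I" "\<omega> \<in> \<Omega>'"
  shows "norm (Lwn \<epsilon> n \<omega> g) \<le> max C 1 * norm g"
  using weak_bounded[OF assms] by (rule cocycle_norm_le_max_one)

lemma Ln_perturbation_bound:
  assumes \<epsilon>: "\<epsilon> \<in> I" and \<omega>: "\<omega> \<in> \<Omega>'" and h: "\<psi> h = 0"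
  shows "norm (j (Ln \<epsilon> n \<omega> h) - j (Ln 0 n \<omega> h)) \<le> n * (max C 1 * C * max D 1) * \<bar>\<epsilon>\<bar> * norm h"
proof -
  define d where "d k = j (L ((\<sigma> ^^ k) \<omega>) \<epsilon> (Ln 0 k \<omega> h)) - j (L ((\<sigma> ^^ k) \<omega>) 0 (Ln 0 k \<omega> h))" for k
  have "j (Ln \<epsilon> n \<omega> h) - j (Ln 0 n \<omega> h) = (\<Sum>k<n. Lwn \<epsilon> (n - Suc k) ((\<sigma> ^^ Suc k) \<omega>) (d k))"
    unfolding d_def using \<epsilon> \<omega> orbit_in_\<Omega>' by (intro cocycle_diff_eq_sum) (simp_all add: Lw_linear L_compat)
  also have "norm \<dots> \<le> (\<Sum>k<n. norm (Lwn \<epsilon> (n - Suc k) ((\<sigma> ^^ Suc k) \<omega>) (d k)))"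
    by (rule norm_sum)
  also have "\<dots> \<le> (\<Sum>k<n. max C 1 * C * max D 1 * \<bar>\<epsilon>\<bar> * norm h)"
  proof (rule sum_mono)
    fix k
    have "norm (Lwn \<epsilon> (n - Suc k) ((\<sigma> ^^ Suc k) \<omega>) (d k)) \<le> max C 1 * norm (d k)"
      using \<epsilon> \<omega> orbit_in_\<Omega>' by (intro Lwn_bounded)
    also have "\<dots> \<le> max C 1 * (C * \<bar>\<epsilon>\<bar> * norm (Ln 0 k \<omega> h))"
      unfolding d_def using \<epsilon> \<omega> orbit_in_\<Omega>' by (intro mult_left_mono perturbation_small) auto
    also have "\<dots> \<le> max C 1 * (C * \<bar>\<epsilon>\<bar> * (max D 1 * norm h))"
      using \<omega> h C_pos by (intro mult_left_mono Ln0_bounded_on_kernel) auto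
    finally show "norm (Lwn \<epsilon> (n - Suc k) ((\<sigma> ^^ Suc k) \<omega>) (d k)) \<le> max C 1 * C * max D 1 * \<bar>\<epsilon>\<bar> * norm h"
      by (simp add: ac_simps)
  qed
  finally show ?thesis
    by (simp add: ac_simps)
qed

lemma Ln_double_step:
  assumes \<epsilon>: "\<epsilon> \<in> I" and \<omega>: "\<omega> \<in> \<Omega>'" and h: "\<psi> h = 0" and N: "N \<ge> 1"
  shows "norm (Ln \<epsilon> (2 * N) \<omega> h) \<le>
    (C * \<kappa> ^ N * max (2 * C) 1 + C * D * exp (- \<gamma> * N) + C * N * (max C 1 * C * max D 1) * \<bar>\<epsilon>\<bar>) * norm h"
proof -
  define g where "g = Ln \<epsilon> N \<omega> h"
  have g_strong: "norm g \<le> max (2 * C) 1 * norm h"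
    unfolding g_def using \<epsilon> \<omega> by (rule Ln_bounded)
  have "norm (j g) \<le> norm (j (Ln 0 N \<omega> h)) + norm (j g - j (Ln 0 N \<omega> h))"
    by (rule norm_triangle_sub)
  also have "\<dots> \<le> D * exp (- \<gamma> * N) * norm h + N * (max C 1 * C * max D 1) * \<bar>\<epsilon>\<bar> * norm h"
    using j_norm[of "Ln 0 N \<omega> h"] unperturbed_decay[OF \<omega> N h] Ln_perturbation_bound[OF \<epsilon> \<omega> h, of N]
    unfolding g_def by linarith
  finally have g_weak: "norm (j g) \<le> D * exp (- \<gamma> * N) * norm h + N * (max C 1 * C * max D 1) * \<bar>\<epsilon>\<bar> * norm h" .
  have "Ln \<epsilon> (2 * N) \<omega> h = Ln \<epsilon> N ((\<sigma> ^^ N) \<omega>) g"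
    by (simp add: g_def mult_2 cocycle_add)
  also have "norm \<dots> \<le> C * \<kappa> ^ N * norm g + C * norm (j g)"
    using lasota_yorke[OF \<epsilon> orbit_in_\<Omega>'[OF \<omega>] N] .
  also have "\<dots> \<le> C * \<kappa> ^ N * (max (2 * C) 1 * norm h)
      + C * (D * exp (- \<gamma> * N) * norm h + N * (max C 1 * C * max D 1) * \<bar>\<epsilon>\<bar> * norm h)"
    using g_strong g_weak C_pos \<kappa> by (intro add_mono mult_left_mono) auto
  finally show ?thesis
    by (simp add: algebra_simps)
qed

lemma Ln_halves_kernel:
  obtains N \<epsilon>\<^sub>0 where "N \<ge> 1" "0 < \<epsilon>\<^sub>0"
    "\<And>\<epsilon> \<omega> h. \<epsilon> \<in> I \<Longrightarrow> \<bar>\<epsilon>\<bar> \<le> \<epsilon>\<^sub>0 \<Longrightarrow> \<omega> \<in> \<Omega>' \<Longrightarrow> \<psi> h = 0 \<Longrightarrow>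
      norm (Ln \<epsilon> (2 * N) \<omega> h) \<le> 1 / 2 * norm h"
proof -
  have "(\<lambda>N. C * max (2 * C) 1 * \<kappa> ^ N + C * D * exp (- \<gamma>) ^ N) \<longlonglongrightarrow> 0"
    using \<kappa> \<gamma>_pos by (intro tendsto_add_zero tendsto_mult_right_zero LIMSEQ_power_zero) auto
  then have "eventually (\<lambda>N. C * max (2 * C) 1 * \<kappa> ^ N + C * D * exp (- \<gamma>) ^ N < 1 / 4) sequentially"
    by (rule order_tendstoD) simp
  then obtain N\<^sub>0 where N\<^sub>0: "\<And>N. N \<ge> N\<^sub>0 \<Longrightarrow> C * max (2 * C) 1 * \<kappa> ^ N + C * D * exp (- \<gamma>) ^ N < 1 / 4"
    by (auto simp: eventually_sequentially)
  define N where "N = Suc N\<^sub>0"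
  have N: "N \<ge> 1"
    by (simp add: N_def)
  define K where "K = C * N * (max C 1 * C * max D 1)"
  have K: "0 < K"
    using C_pos D_pos N by (simp add: K_def)
  show thesis
  proof
    show "N \<ge> 1" "0 < 1 / (4 * K)"
      using N K by simp_all
    fix \<epsilon> \<omega> h
    assume \<epsilon>: "\<epsilon> \<in> I" "\<bar>\<epsilon>\<bar> \<le> 1 / (4 * K)" and \<omega>: "\<omega> \<in> \<Omega>'" and h: "\<psi> h = 0"
    have "K * \<bar>\<epsilon>\<bar> \<le> 1 / 4"
      using \<epsilon>(2) K by (simp add: le_divide_eq mult_ac)
    moreover have "C * \<kappa> ^ N * max (2 * C) 1 + C * D * exp (- \<gamma> * N) < 1 / 4"
      using N\<^sub>0[of N] exp_of_nat_mult[of N "- \<gamma>"] by (simp add: N_def mult_ac)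
    ultimately have "C * \<kappa> ^ N * max (2 * C) 1 + C * D * exp (- \<gamma> * N) + K * \<bar>\<epsilon>\<bar> \<le> 1 / 2"
      by linarith
    then have "(C * \<kappa> ^ N * max (2 * C) 1 + C * D * exp (- \<gamma> * N) + K * \<bar>\<epsilon>\<bar>) * norm h \<le> 1 / 2 * norm h"
      by (rule mult_right_mono) simp
    with Ln_double_step[OF \<epsilon>(1) \<omega> h N, folded K_def]
    show "norm (Ln \<epsilon> (2 * N) \<omega> h) \<le> 1 / 2 * norm h"
      by (rule order_trans)
  qed
qed

lemma Ln_uniform_exponential_decay:
  "\<exists>\<epsilon>\<^sub>0 > 0. \<exists>D' > 0. \<exists>\<mu> > 0. \<forall>\<epsilon>\<in>I. \<bar>\<epsilon>\<bar> \<le> \<epsilon>\<^sub>0 \<longrightarrow>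
     (\<forall>\<omega>\<in>\<Omega>'. \<forall>n. \<forall>h. \<psi> h = 0 \<longrightarrow> norm (Ln \<epsilon> n \<omega> h) \<le> D' * exp (- \<mu> * real n) * norm h)"
proof -
  obtain N \<epsilon>\<^sub>0 where N: "N \<ge> 1" and \<epsilon>\<^sub>0: "0 < \<epsilon>\<^sub>0"
    and halves: "\<And>\<epsilon> \<omega> h. \<epsilon> \<in> I \<Longrightarrow> \<bar>\<epsilon>\<bar> \<le> \<epsilon>\<^sub>0 \<Longrightarrow> \<omega> \<in> \<Omega>' \<Longrightarrow> \<psi> h = 0 \<Longrightarrow>
      norm (Ln \<epsilon> (2 * N) \<omega> h) \<le> 1 / 2 * norm h"
    using Ln_halves_kernel by blast
  define \<mu> where "\<mu> = ln 2 / (2 * N)"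
  have "norm (Ln \<epsilon> n \<omega> h) \<le> 2 * max (2 * C) 1 * exp (- \<mu> * n) * norm h"
    if "\<epsilon> \<in> I" "\<bar>\<epsilon>\<bar> \<le> \<epsilon>\<^sub>0" "\<omega> \<in> \<Omega>'" "\<psi> h = 0" for \<epsilon> \<omega> n h
  proof -
    have "norm (Ln \<epsilon> n \<omega> h) \<le> max (2 * C) 1 / (1 / 2) * exp (ln (1 / 2) / real (2 * N) * n) * norm h"
      using that N halves[OF that(1,2)]
      by (intro cocycle_exp_decay_of_periodic_contraction[where S = \<Omega>' and V = "{h. \<psi> h = 0}"])
        (auto simp: \<Omega>'_invariant \<psi>_invariant Ln_bounded)
    then show ?thesis
      by (simp add: \<mu>_def ln_div)
  qed
  moreover have "0 < \<mu>" "0 < 2 * max (2 * C) 1"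
    using N by (auto simp: \<mu>_def)
  ultimately show ?thesis
    using \<epsilon>\<^sub>0 by blast
qed

end

theorem proposition3p2:
  fixes M :: "'o measure" and \<sigma> :: "'o \<Rightarrow> 'o"
    and j :: "'s::banach \<Rightarrow> 'w::banach"
    and \<psi> :: "'s \<Rightarrow> real" and \<psi>w :: "'w \<Rightarrow> real"
    and I :: "real set"
    and L :: "'o \<Rightarrow> real \<Rightarrow> 's \<Rightarrow> 's"
    and Lw :: "'o \<Rightarrow> real \<Rightarrow> 'w \<Rightarrow> 'w"
    and C D \<gamma> \<kappa> :: real and \<Omega>' :: "'o set"
  assumes prob: "prob_space M"
    and inv: "invertible_measurable_map M \<sigma>"
    and erg: "ergodic_map M \<sigma>"
    \<comment> \<open>B_s embedded in B_w, with weak norm dominated by strong norm\<close>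
    and j_lin: "bounded_linear j" and j_inj: "inj j"
    and j_norm: "\<And>h. norm (j h) \<le> norm h"
    \<comment> \<open>psi nonzero bounded functional on B_s with bounded extension to B_w\<close>
    and psi_lin: "bounded_linear \<psi>" and psi_nz: "\<exists>h. \<psi> h \<noteq> 0"
    and psiw_lin: "bounded_linear \<psi>w" and psi_ext: "\<And>h. \<psi>w (j h) = \<psi> h"
    \<comment> \<open>I an interval containing 0\<close>
    and I_int: "is_interval I" and I0: "0 \<in> I"
    \<comment> \<open>operators bounded on both spaces, compatible with the inclusion\<close>
    and L_lin: "\<And>\<omega> \<epsilon>. \<omega> \<in> space M \<Longrightarrow> \<epsilon> \<in> I \<Longrightarrow> bounded_linear (L \<omega> \<epsilon>)"
    and Lw_lin: "\<And>\<omega> \<epsilon>. \<omega> \<in> space M \<Longrightarrow> \<epsilon> \<in> I \<Longrightarrow> bounded_linear (Lw \<omega> \<epsilon>)"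
    and L_compat: "\<And>\<omega> \<epsilon> h. \<omega> \<in> space M \<Longrightarrow> \<epsilon> \<in> I \<Longrightarrow> Lw \<omega> \<epsilon> (j h) = j (L \<omega> \<epsilon> h)"
    and L_meas: "\<And>\<epsilon> h. \<epsilon> \<in> I \<Longrightarrow> (\<lambda>\<omega>. L \<omega> \<epsilon> h) \<in> borel_measurable M"
    \<comment> \<open>constants and full-measure invariant set\<close>
    and C_pos: "C > 0" and D_pos: "D > 0" and lam_pos: "\<gamma> > 0"
    and lam1: "0 < \<kappa>" "\<kappa> < 1"
    and \<Omega>'_meas: "\<Omega>' \<in> sets M" and \<Omega>'_inv: "\<sigma> -` \<Omega>' \<inter> space M = \<Omega>'"
    and \<Omega>'_full: "measure M \<Omega>' = 1"
    \<comment> \<open>(a)\<close>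
    and hyp_a: "\<And>\<omega> n h. \<omega> \<in> \<Omega>' \<Longrightarrow> n \<ge> 1 \<Longrightarrow> \<psi> h = 0 \<Longrightarrow>
        norm (cocycle (\<lambda>\<omega>. L \<omega> 0) \<sigma> n \<omega> h) \<le> D * exp (- \<gamma> * real n) * norm h"
    \<comment> \<open>(b)\<close>
    and hyp_b: "\<And>\<epsilon> \<omega> n h. \<epsilon> \<in> I \<Longrightarrow> \<omega> \<in> \<Omega>' \<Longrightarrow> n \<ge> 1 \<Longrightarrow>
        norm (cocycle (\<lambda>\<omega>. L \<omega> \<epsilon>) \<sigma> n \<omega> h) \<le> C * \<kappa> ^ n * norm h + C * norm (j h)"
    \<comment> \<open>(c)\<close>
    and hyp_c: "\<And>\<epsilon> \<omega> h. \<epsilon> \<in> I \<Longrightarrow> \<omega> \<in> \<Omega>' \<Longrightarrow>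
        norm (j (L \<omega> \<epsilon> h) - j (L \<omega> 0 h)) \<le> C * \<bar>\<epsilon>\<bar> * norm h"
    \<comment> \<open>(d)\<close>
    and hyp_d: "\<And>\<epsilon> \<omega> n g. \<epsilon> \<in> I \<Longrightarrow> \<omega> \<in> \<Omega>' \<Longrightarrow> n \<ge> 1 \<Longrightarrow>
        norm (cocycle (\<lambda>\<omega>. Lw \<omega> \<epsilon>) \<sigma> n \<omega> g) \<le> C * norm g"
    \<comment> \<open>(e)\<close>
    and hyp_e: "\<And>\<epsilon> \<omega> h. \<epsilon> \<in> I \<Longrightarrow> \<omega> \<in> \<Omega>' \<Longrightarrow> \<psi> (L \<omega> \<epsilon> h) = \<psi> h"
  shows "\<exists>\<epsilon>\<^sub>0 > 0. \<exists>D' > 0. \<exists>\<mu> > 0. \<forall>\<epsilon>\<in>I. \<bar>\<epsilon>\<bar> \<le> \<epsilon>\<^sub>0 \<longrightarrow>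
     (\<forall>\<omega>\<in>\<Omega>'. \<forall>n::nat. \<forall>h. \<psi> h = 0 \<longrightarrow>
        norm (cocycle (\<lambda>\<omega>. L \<omega> \<epsilon>) \<sigma> n \<omega> h) \<le> D' * exp (- \<mu> * real n) * norm h)"
proof -
  have \<Omega>'_space: "\<Omega>' \<subseteq> space M"
    using \<Omega>'_meas by (rule sets.sets_into_space)
  interpret perturbed_cocycle \<sigma> \<Omega>' j \<psi> I L Lw C D \<gamma> \<kappa>
  proof (rule perturbed_cocycle.intro)
    show "\<sigma> \<omega> \<in> \<Omega>'" if "\<omega> \<in> \<Omega>'" for \<omega>
      using \<Omega>'_inv that by blast
    show "linear (Lw \<omega> \<epsilon>)" if "\<omega> \<in> \<Omega>'" "\<epsilon> \<in> I" for \<omega> \<epsilon>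
      using Lw_lin that \<Omega>'_space bounded_linear.linear by blast
    show "Lw \<omega> \<epsilon> (j h) = j (L \<omega> \<epsilon> h)" if "\<omega> \<in> \<Omega>'" "\<epsilon> \<in> I" for \<omega> \<epsilon> h
      using L_compat that \<Omega>'_space by blast
  qed (fact j_norm C_pos D_pos lam_pos lam1 hyp_a hyp_b hyp_c hyp_d hyp_e)+
  show ?thesis
    by (rule Ln_uniform_exponential_decay)
qed

end
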